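(* Let $N=2^n$, fix a part $S_\beta$ (write $\beta=(S_\beta)$), and let $t$ be a random permutation of $\{0,\dots,N-1\}$ whose distribution is $\delta'$ non-$\beta$-uniform. Fix $\delta>0$ and $\gamma=2^{-m}$. Let $h$ be an arbitrary function on permutations and $r$ a value with $\Pr[h(t)=r]\ge\gamma$, and let $s$ denote $t$ conditioned on $h(t)=r$. Then there exist finitely many distributions $\mathbb{F}_i$, each $(p,\delta+\delta')$ non-$\beta$-uniform with $p=2m/\delta$, an arbitrary distribution $\mathbb{F}'$ on permutations and nonnegative weights $\alpha_i,\gamma'$ with $\sum_i\alpha_i+\gamma'=1$, $\gamma'\le\gamma$, such that the distribution of $s$ equals $\sum_i\alpha_i\mathbb{F}_i+\gamma'\mathbb{F}'$.
   Context: A part is a set $S=\{(x_i,y_i)\}_{i=1}^M$ such that some permutation $\pi$ of $\{0,\dots,N-1\}$ has $\pi(x_i)=y_i$ for all $i$; "$S\subseteq\mathrm{parts}(t)$" means $t(x_i)=y_i$ for all $i$. Parts $S,S'$ are distinct if they share no input and $S\cup S'$ is a part. Let $u$ be a uniformly random permutation. The $\beta$-uniform distribution (for $\beta=(S_\beta)$) is the law of $b:=u$ conditioned on $S_\beta\subseteq\mathrm{parts}(u)$. A random permutation $t$ is $\delta$ non-$\beta$-uniform if $\Pr[S\subseteq\mathrm{parts}(t)]\le2^{\delta|S|}\Pr[S\subseteq\mathrm{parts}(b)]$ for every part $S$. It is $(p,\delta)$ non-$\beta$-uniform if there is a part $S_0$ with $|S_0|\le p$ and $\Pr[S_0\subseteq\mathrm{parts}(t)]=1$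 such that for every part $S$ distinct from $S_0$, $\Pr[S\subseteq\mathrm{parts}(t)]\le2^{\delta|S|}\Pr[S\subseteq\mathrm{parts}(b)\mid S_0\subseteq\mathrm{parts}(b)]$. *)

theory Defs
  imports "HOL-Probability.Probability" "HOL-Combinatorics.Permutations"
begin

definition perms :: "nat \<Rightarrow> (nat \<Rightarrow> nat) set" where
  "perms N = {f. f permutes {..<N}}"

definition is_part :: "nat \<Rightarrow> (nat \<times> nat) set \<Rightarrow> bool" where
  "is_part N S \<longleftrightarrow> finite S \<and> (\<exists>\<pi>\<in>perms N. \<forall>(x,y)\<in>S. \<pi> x = y)"

definition in_parts :: "(nat \<times> nat) set \<Rightarrow> (nat \<Rightarrow> nat) \<Rightarrow> bool" where
  "in_parts S t \<longleftrightarrow> (\<forall>(x,y)\<in>S. t x = y)"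

definition distinct_parts :: "nat \<Rightarrow> (nat \<times> nat) set \<Rightarrow> (nat \<times> nat) set \<Rightarrow> bool" where
  "distinct_parts N S S' \<longleftrightarrow> fst ` S \<inter> fst ` S' = {} \<and> is_part N (S \<union> S')"

definition uniform_perm :: "nat \<Rightarrow> (nat \<Rightarrow> nat) pmf" where
  "uniform_perm N = pmf_of_set (perms N)"

definition beta_uniform :: "nat \<Rightarrow> (nat \<times> nat) set \<Rightarrow> (nat \<Rightarrow> nat) pmf" where
  "beta_uniform N Sb = cond_pmf (uniform_perm N) {f. in_parts Sb f}"

definition Pr_part :: "(nat \<Rightarrow> nat) pmf \<Rightarrow> (nat \<times> nat) set \<Rightarrow> real" where
  "Pr_part D S = measure_pmf.prob D {f. in_parts S f}"

definition Pr_part_cond :: "(nat \<Rightarrow> nat) pmf \<Rightarrow> (nat \<times> nat) set \<Rightarrow> (nat \<times> nat) set \<Rightarrow> real" where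
  "Pr_part_cond D S S0 =
     measure_pmf.prob D {f. in_parts S f \<and> in_parts S0 f} / measure_pmf.prob D {f. in_parts S0 f}"

definition non_beta_uniform :: "nat \<Rightarrow> (nat \<times> nat) set \<Rightarrow> real \<Rightarrow> (nat \<Rightarrow> nat) pmf \<Rightarrow> bool" where
  "non_beta_uniform N Sb \<delta> t \<longleftrightarrow>
     (\<forall>S. is_part N S \<longrightarrow>
        Pr_part t S \<le> 2 powr (\<delta> * real (card S)) * Pr_part (beta_uniform N Sb) S)"

definition p_non_beta_uniform ::
  "nat \<Rightarrow> (nat \<times> nat) set \<Rightarrow> real \<Rightarrow> real \<Rightarrow> (nat \<Rightarrow> nat) pmf \<Rightarrow> bool" where
  "p_non_beta_uniform N Sb p \<delta> t \<longleftrightarrow>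
     (\<exists>S0. is_part N S0 \<and> real (card S0) \<le> p \<and> Pr_part t S0 = 1 \<and>
        (\<forall>S. is_part N S \<longrightarrow> distinct_parts N S S0 \<longrightarrow>
           Pr_part t S \<le> 2 powr (\<delta> * real (card S)) * Pr_part_cond (beta_uniform N Sb) S S0))"

end

theory Submission
  imports Defs
begin

text \<open>Conditioning \<open>t\<close> on an event of probability at least \<open>\<gamma>\<close> yields \<open>s\<close> with
  \<open>Pr[S \<subseteq> parts s] \<le> 2 powr (\<delta>' |S|) Pr[S \<subseteq> parts b] / \<gamma>\<close>.
  Split \<open>s\<close> greedily: while the remaining event \<open>A\<close> has mass above \<open>\<gamma>\<close>,
  pick a part \<open>S0\<close> maximising
  \<open>Pr[A, S0 \<subseteq> parts s] / (2 powr ((\<delta> + \<delta>') |S0|) Pr[S0 \<subseteq> parts b])\<close>.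
  Comparing \<open>S0\<close> with the empty part and with the upper bound gives
  \<open>\<gamma>\<^sup>2 2 powr (\<delta> |S0|) < 1\<close>, i.e. \<open>|S0| \<le> 2m/\<delta>\<close>; comparing it with \<open>S \<union> S0\<close>
  shows that \<open>s\<close> conditioned on \<open>A\<close> and \<open>S0\<close> is \<open>(2m/\<delta>, \<delta> + \<delta>')\<close>
  non-\<open>\<beta>\<close>-uniform. Peel this piece off and continue on \<open>A - {S0 \<subseteq> parts}\<close>;
  the mass left when the process stops is at most \<open>\<gamma>\<close>.\<close>

lemma measure_cond_pmf:
  assumes "set_pmf p \<inter> A \<noteq> {}"
  shows "measure_pmf.prob (cond_pmf p A) B = measure_pmf.prob p (A \<inter> B) / measure_pmf.prob p A"
proof -
  have "emeasure (measure_pmf p) A \<noteq> 0"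
    using assms by (simp add: emeasure_measure_pmf_not_zero)
  then show ?thesis by (simp add: cond_pmf.rep_eq[OF assms])
qed

lemma finite_perms: "finite (perms N)"
  unfolding perms_def by (rule finite_permutations) simp

lemma id_in_perms: "id \<in> perms N"
  unfolding perms_def by simp

lemma set_pmf_uniform_perm: "set_pmf (uniform_perm N) = perms N"
  unfolding uniform_perm_def using finite_perms id_in_perms by (intro set_pmf_of_set) auto

lemma set_pmf_beta_uniform:
  assumes "is_part N Sb"
  shows "set_pmf (beta_uniform N Sb) \<subseteq> perms N"
proof -
  have "set_pmf (uniform_perm N) \<inter> Collect (in_parts Sb) \<noteq> {}"
    using assms unfolding is_part_def in_parts_def set_pmf_uniform_perm by auto
  then show ?thesis unfolding beta_uniform_def using set_cond_pmf set_pmf_uniform_perm by auto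
qed

lemma is_part_subset: "is_part N S \<Longrightarrow> T \<subseteq> S \<Longrightarrow> is_part N T"
  unfolding is_part_def by (meson finite_subset subsetD)

lemma in_parts_Un: "in_parts (S \<union> T) f \<longleftrightarrow> in_parts S f \<and> in_parts T f"
  unfolding in_parts_def ball_Un by simp

definition grid :: "nat \<Rightarrow> (nat \<times> nat) set" where
  "grid N = {..<N} \<times> {..<N}"

text \<open>Outside the grid a part can only contain fixed points \<open>(x, x)\<close> with \<open>x \<ge> N\<close>, which
  every permutation in \<open>perms N\<close> satisfies.\<close>
lemma in_parts_Int_grid:
  assumes "is_part N S" "f \<in> perms N"
  shows "in_parts (S \<inter> grid N) f \<longleftrightarrow> in_parts S f"
proof -
  obtain \<pi> where \<pi>: "\<pi> permutes {..<N}" "in_parts S \<pi>"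
    using assms(1) unfolding is_part_def perms_def in_parts_def by auto
  have f: "f permutes {..<N}" using assms(2) by (simp add: perms_def)
  have "f x = y" if "(x, y) \<in> S" "(x, y) \<notin> grid N" for x y
  proof -
    have "\<pi> x = y" using \<pi>(2) that(1) by (auto simp: in_parts_def)
    moreover have "x \<notin> {..<N}"
      using that(2) permutes_in_image[OF \<pi>(1)] \<open>\<pi> x = y\<close> by (auto simp: grid_def)
    ultimately show ?thesis using permutes_not_in[OF \<pi>(1)] permutes_not_in[OF f] by auto
  qed
  then show ?thesis unfolding in_parts_def by (auto split: prod.splits; metis IntI)
qed

lemma prob_in_parts_Int_grid:
  assumes "is_part N S" "set_pmf p \<subseteq> perms N"
  shows "measure_pmf.prob p (A \<inter> Collect (in_parts (S \<inter> grid N)))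
       = measure_pmf.prob p (A \<inter> Collect (in_parts S))"
proof -
  have "A \<inter> Collect (in_parts (S \<inter> grid N)) \<inter> set_pmf p = A \<inter> Collect (in_parts S) \<inter> set_pmf p"
    using in_parts_Int_grid[OF assms(1)] assms(2) by blast
  then show ?thesis by (metis measure_Int_set_pmf)
qed

text \<open>Every permutation contains the part \<open>{(N, N)}\<close>, so comparing its probabilities forces
  \<open>1 \<le> 2 powr \<delta>\<close>.\<close>
lemma non_beta_uniform_nonneg:
  assumes "set_pmf t \<subseteq> perms N" "is_part N Sb" "non_beta_uniform N Sb \<delta> t"
  shows "\<delta> \<ge> 0"
proof -
  have part: "is_part N {(N, N)}"
    unfolding is_part_def in_parts_def by (auto intro!: bexI[of _ id] id_in_perms)
  have "perms N \<subseteq> Collect (in_parts {(N, N)})"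
    unfolding perms_def in_parts_def by (auto intro: permutes_not_in)
  then have "set_pmf t \<subseteq> Collect (in_parts {(N, N)})"
    "set_pmf (beta_uniform N Sb) \<subseteq> Collect (in_parts {(N, N)})"
    using assms(1) set_pmf_beta_uniform[OF assms(2)] by auto
  then have "Pr_part t {(N, N)} = 1" "Pr_part (beta_uniform N Sb) {(N, N)} = 1"
    unfolding Pr_part_def by (auto simp: measure_pmf.prob_eq_1 AE_measure_pmf_iff)
  with assms(3) part have "2 powr 0 \<le> 2 powr \<delta>" unfolding non_beta_uniform_def by fastforce
  then show ?thesis by (simp only: powr_le_cancel_iff one_less_numeral_iff semiring_norm(76))
qed

lemma Pr_part_cond_pmf_le:
  assumes "0 < \<gamma>" "\<gamma> \<le> measure_pmf.prob t H"
  shows "Pr_part (cond_pmf t H) S \<le> Pr_part t S / \<gamma>"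
proof -
  have "set_pmf t \<inter> H \<noteq> {}" using assms by (auto simp: measure_pmf_zero_iff[symmetric])
  then have "Pr_part (cond_pmf t H) S = measure_pmf.prob t (H \<inter> Collect (in_parts S)) / measure_pmf.prob t H"
    unfolding Pr_part_def by (rule measure_cond_pmf)
  also have "\<dots> \<le> Pr_part t S / \<gamma>"
    unfolding Pr_part_def using assms
    by (intro frac_le measure_pmf.finite_measure_mono) auto
  finally show ?thesis .
qed

text \<open>The locale hypothesis on \<open>s\<close> is what conditioning a \<open>\<delta>'\<close> non-\<open>\<beta>\<close>-uniform
  distribution on an event of probability at least \<open>\<gamma>\<close> provides.\<close>
locale dense_decomposition =
  fixes N :: nat and Sb :: "(nat \<times> nat) set" and s :: "(nat \<Rightarrow> nat) pmf"
    and \<delta> \<delta>' \<gamma> :: real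
  assumes set_pmf_s: "set_pmf s \<subseteq> perms N"
    and Sb_part: "is_part N Sb"
    and \<delta>_pos: "\<delta> > 0" and \<delta>'_nonneg: "\<delta>' \<ge> 0" and \<gamma>_pos: "\<gamma> > 0"
    and Pr_part_s_le: "\<And>S. is_part N S \<Longrightarrow>
       Pr_part s S \<le> 2 powr (\<delta>' * real (card S)) * Pr_part (beta_uniform N Sb) S / \<gamma>"
begin

abbreviation b :: "(nat \<Rightarrow> nat) pmf" where
  "b \<equiv> beta_uniform N Sb"

abbreviation max_card :: real where
  "max_card \<equiv> - 2 * log 2 \<gamma> / \<delta>"

definition density :: "(nat \<Rightarrow> nat) set \<Rightarrow> (nat \<times> nat) set \<Rightarrow> real" where
  "density A S = measure_pmf.prob s (A \<inter> Collect (in_parts S))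
                 / (2 powr ((\<delta> + \<delta>') * real (card S)) * Pr_part b S)"

definition candidates :: "(nat \<times> nat) set set" where
  "candidates = {S. S \<subseteq> grid N \<and> is_part N S \<and> Pr_part b S > 0}"

lemma finite_candidates: "finite candidates"
proof -
  have "finite (grid N)" unfolding grid_def by simp
  then show ?thesis
    unfolding candidates_def by (rule rev_finite_subset[OF finite_Pow_iff[THEN iffD2]]) auto
qed

lemma empty_in_candidates: "{} \<in> candidates"
proof -
  have "is_part N {}" unfolding is_part_def using id_in_perms by auto
  moreover have "Pr_part b {} = 1" unfolding Pr_part_def in_parts_def by simp
  ultimately show ?thesis unfolding candidates_def by auto
qed

lemma density_empty: "density A {} = measure_pmf.prob s A"
  unfolding density_def Pr_part_def in_parts_def by simp

lemma density_maximiser_exists: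
  obtains S0 where "S0 \<in> candidates" "\<And>S. S \<in> candidates \<Longrightarrow> density A S \<le> density A S0"
proof -
  have "Max (density A ` candidates) \<in> density A ` candidates"
    using finite_candidates empty_in_candidates by (intro Max_in) auto
  then obtain S0 where "S0 \<in> candidates" "density A S0 = Max (density A ` candidates)"
    by (metis imageE)
  then show ?thesis using that finite_candidates by simp
qed

text \<open>Cutting a part down to the grid changes neither probability but can only shrink the
  discount, so a maximiser over the finite set of candidates is a maximiser over all parts.\<close>
lemma density_le_maximiser:
  assumes maximal: "\<And>S. S \<in> candidates \<Longrightarrow> density A S \<le> density A S0"
    and U: "is_part N U" "Pr_part b U > 0"
  shows "density A U \<le> density A S0"
proof -
  define U' where "U' = U \<inter> grid N"
  have b_eq: "Pr_part b U' = Pr_part b U"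
    using prob_in_parts_Int_grid[OF U(1) set_pmf_beta_uniform[OF Sb_part], of UNIV]
    unfolding U'_def Pr_part_def by simp
  have s_eq: "measure_pmf.prob s (A \<inter> Collect (in_parts U'))
              = measure_pmf.prob s (A \<inter> Collect (in_parts U))"
    unfolding U'_def by (rule prob_in_parts_Int_grid[OF U(1) set_pmf_s])
  have "U' \<in> candidates"
    using is_part_subset[OF U(1)] U(2) b_eq unfolding U'_def candidates_def by auto
  have "finite U" using U(1) unfolding is_part_def by simp
  then have "2 powr ((\<delta> + \<delta>') * real (card U')) \<le> 2 powr ((\<delta> + \<delta>') * real (card U))"
    using \<delta>_pos \<delta>'_nonneg unfolding U'_def
    by (intro powr_mono mult_left_mono card_mono) (auto intro: card_mono)
  then have "density A U \<le> density A U'"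
    unfolding density_def s_eq b_eq using U(2)
    by (intro divide_left_mono mult_right_mono) auto
  also have "\<dots> \<le> density A S0" using maximal[OF \<open>U' \<in> candidates\<close>] .
  finally show ?thesis .
qed

lemma maximiser_mass:
  assumes "S0 \<in> candidates" "\<And>S. S \<in> candidates \<Longrightarrow> density A S \<le> density A S0"
  shows "measure_pmf.prob s A * (2 powr ((\<delta> + \<delta>') * real (card S0)) * Pr_part b S0)
           \<le> measure_pmf.prob s (A \<inter> Collect (in_parts S0))"
proof -
  have "Pr_part b S0 > 0" using assms(1) unfolding candidates_def by simp
  moreover have "measure_pmf.prob s A \<le> density A S0"
    using assms(2)[OF empty_in_candidates] by (simp add: density_empty)
  ultimately show ?thesis unfolding density_def by (simp add: pos_le_divide_eq)
qed

text \<open>A maximiser carries mass at least \<open>\<gamma> 2 powr ((\<delta> + \<delta>') |S0|) Pr[S0 \<subseteq> parts b]\<close>,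
  while the hypothesis on \<open>s\<close> caps it at \<open>2 powr (\<delta>' |S0|) Pr[S0 \<subseteq> parts b] / \<gamma>\<close>;
  hence \<open>\<gamma>\<^sup>2 2 powr (\<delta> |S0|) < 1\<close>.\<close>
lemma card_maximiser_le:
  assumes "measure_pmf.prob s A > \<gamma>"
    and "S0 \<in> candidates" "\<And>S. S \<in> candidates \<Longrightarrow> density A S \<le> density A S0"
  shows "real (card S0) \<le> max_card"
proof -
  define k where "k = real (card S0)"
  define P0 where "P0 = Pr_part b S0"
  have S0: "is_part N S0" "P0 > 0" using assms(2) unfolding candidates_def P0_def by auto
  have "\<gamma> * (2 powr (\<delta> * k) * (2 powr (\<delta>' * k) * P0))
          < measure_pmf.prob s A * (2 powr ((\<delta> + \<delta>') * k) * P0)"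
    using assms(1) S0(2) by (simp add: distrib_right powr_add)
  also have "\<dots> \<le> measure_pmf.prob s (A \<inter> Collect (in_parts S0))"
    using maximiser_mass[OF assms(2,3)] unfolding k_def P0_def .
  also have "\<dots> \<le> Pr_part s S0"
    unfolding Pr_part_def by (rule measure_pmf.finite_measure_mono) auto
  also have "\<dots> \<le> 2 powr (\<delta>' * k) * P0 / \<gamma>"
    using Pr_part_s_le[OF S0(1)] unfolding k_def P0_def .
  finally have "\<gamma> * \<gamma> * 2 powr (\<delta> * k) < 1"
    using \<gamma>_pos S0(2) by (simp add: field_simps)
  moreover have "\<gamma> * \<gamma> * 2 powr (\<delta> * k) = 2 powr (2 * log 2 \<gamma> + \<delta> * k)"
  proof -
    have "\<gamma> * \<gamma> * 2 powr (\<delta> * k) = 2 powr (log 2 \<gamma>) * 2 powr (log 2 \<gamma>) * 2 powr (\<delta> * k)"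
      using \<gamma>_pos by simp
    also have "\<dots> = 2 powr (log 2 \<gamma> + log 2 \<gamma> + \<delta> * k)"
      by (simp only: powr_add)
    also have "\<dots> = 2 powr (2 * log 2 \<gamma> + \<delta> * k)"
      by (rule arg_cong[where f = "(powr) 2"]) linarith
    finally show ?thesis .
  qed
  ultimately have "2 powr (2 * log 2 \<gamma> + \<delta> * k) < 2 powr 0" by simp
  then have "k * \<delta> \<le> - 2 * log 2 \<gamma>"
    by (simp only: powr_less_cancel_iff one_less_numeral_iff semiring_norm(76)) argo
  then show ?thesis unfolding k_def by (simp only: pos_le_divide_eq[OF \<delta>_pos])
qed

lemma Pr_part_cond_eq: "Pr_part_cond D S S0 = Pr_part D (S \<union> S0) / Pr_part D S0"
  unfolding Pr_part_cond_def Pr_part_def in_parts_Un by simp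

text \<open>Maximality of \<open>S0\<close> against the part \<open>S \<union> S0\<close> is exactly the bound required of \<open>S\<close>
  after conditioning on \<open>A\<close> and \<open>S0\<close>.\<close>
lemma prob_Un_maximiser_le:
  assumes "S0 \<in> candidates" "\<And>S. S \<in> candidates \<Longrightarrow> density A S \<le> density A S0"
    and mass_pos: "measure_pmf.prob s (A \<inter> Collect (in_parts S0)) > 0"
    and S: "is_part N S" "distinct_parts N S S0"
  shows "measure_pmf.prob s (A \<inter> Collect (in_parts (S \<union> S0)))
           / measure_pmf.prob s (A \<inter> Collect (in_parts S0))
         \<le> 2 powr ((\<delta> + \<delta>') * real (card S)) * Pr_part_cond b S S0"
proof -
  define U where "U = S \<union> S0"
  define X where "X = measure_pmf.prob s (A \<inter> Collect (in_parts U))"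
  define \<mu>0 where "\<mu>0 = measure_pmf.prob s (A \<inter> Collect (in_parts S0))"
  define P0 where "P0 = Pr_part b S0"
  have S0: "is_part N S0" "P0 > 0" using assms(1) unfolding candidates_def P0_def by auto
  have U: "is_part N U" using S(2) unfolding distinct_parts_def U_def by simp
  have "finite S" "finite S0" using S(1) S0(1) unfolding is_part_def by auto
  moreover have "S \<inter> S0 = {}" using S(2) unfolding distinct_parts_def by force
  ultimately have card_U: "card U = card S + card S0"
    unfolding U_def by (simp add: card_Un_disjoint)
  show ?thesis
  proof (cases "Pr_part b U = 0")
    case True
    have "X \<le> Pr_part s U"
      unfolding X_def Pr_part_def by (rule measure_pmf.finite_measure_mono) auto
    also have "\<dots> \<le> 0" using Pr_part_s_le[OF U] True by simp
    finally have "X = 0" unfolding X_def using measure_nonneg by (rule order_antisym)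
    then show ?thesis using True unfolding Pr_part_cond_eq X_def U_def by simp
  next
    case False
    define PU where "PU = Pr_part b U"
    define KS where "KS = 2 powr ((\<delta> + \<delta>') * real (card S))"
    define K0 where "K0 = 2 powr ((\<delta> + \<delta>') * real (card S0))"
    have pos: "PU > 0" "KS > 0" "K0 > 0" "\<mu>0 > 0"
      using False mass_pos unfolding PU_def KS_def K0_def \<mu>0_def
      by (auto simp: order_less_le Pr_part_def)
    have "2 powr ((\<delta> + \<delta>') * real (card U)) = KS * K0"
      unfolding KS_def K0_def card_U by (simp add: distrib_left powr_add)
    then have ratio_le: "X / (KS * K0 * PU) \<le> \<mu>0 / (K0 * P0)"
      using density_le_maximiser[OF assms(2) U pos(1)[unfolded PU_def]]
      unfolding density_def X_def \<mu>0_def P0_def PU_def K0_def by simp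
    have "X / \<mu>0 = X / (KS * K0 * PU) * (KS * K0 * PU) / \<mu>0"
      using pos by simp
    also have "\<dots> \<le> \<mu>0 / (K0 * P0) * (KS * K0 * PU) / \<mu>0"
      using ratio_le pos by (intro divide_right_mono mult_right_mono) auto
    also have "\<dots> = KS * (PU / P0)"
      using pos by simp
    finally show ?thesis
      unfolding Pr_part_cond_eq X_def U_def \<mu>0_def P0_def PU_def KS_def .
  qed
qed

lemma p_non_beta_uniform_cond_maximiser:
  assumes "S0 \<in> candidates" "\<And>S. S \<in> candidates \<Longrightarrow> density A S \<le> density A S0"
    and mass_pos: "measure_pmf.prob s (A \<inter> Collect (in_parts S0)) > 0"
    and card_le: "real (card S0) \<le> p"
  shows "p_non_beta_uniform N Sb p (\<delta> + \<delta>') (cond_pmf s (A \<inter> Collect (in_parts S0)))"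
    (is "p_non_beta_uniform _ _ _ _ ?F")
proof -
  have S0: "is_part N S0" using assms(1) unfolding candidates_def by simp
  have nonempty: "set_pmf s \<inter> (A \<inter> Collect (in_parts S0)) \<noteq> {}"
    using mass_pos by (auto simp: measure_pmf_zero_iff[symmetric])
  have Pr_F: "Pr_part ?F S = measure_pmf.prob s (A \<inter> Collect (in_parts (S \<union> S0)))
                                  / measure_pmf.prob s (A \<inter> Collect (in_parts S0))" for S
    unfolding Pr_part_def measure_cond_pmf[OF nonempty] in_parts_Un
    by (simp add: Int_ac Collect_conj_eq)
  have "Pr_part ?F S0 = 1" using Pr_F[of S0] mass_pos by simp
  moreover have "Pr_part ?F S \<le> 2 powr ((\<delta> + \<delta>') * real (card S)) * Pr_part_cond b S S0"
    if "is_part N S" "distinct_parts N S S0" for S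
    unfolding Pr_F using prob_Un_maximiser_le[OF assms(1,2) mass_pos that] .
  ultimately show ?thesis
    unfolding p_non_beta_uniform_def using S0 card_le by blast
qed

definition decomposable :: "(nat \<Rightarrow> nat) set \<Rightarrow> bool" where
  "decomposable A \<longleftrightarrow> (\<exists>(k::nat) F \<alpha> F' \<gamma>'.
     (\<forall>i<k. set_pmf (F i) \<subseteq> perms N \<and>
            p_non_beta_uniform N Sb max_card (\<delta> + \<delta>') (F i) \<and> \<alpha> i \<ge> 0) \<and>
     set_pmf F' \<subseteq> perms N \<and> \<gamma>' \<ge> 0 \<and>
     (\<Sum>i<k. \<alpha> i) + \<gamma>' = measure_pmf.prob s A \<and> \<gamma>' \<le> \<gamma> \<and>
     (\<forall>x. pmf s x * indicator A x = (\<Sum>i<k. \<alpha> i * pmf (F i) x) + \<gamma>' * pmf F' x))"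

lemma decomposable_if_light:
  assumes "measure_pmf.prob s A \<le> \<gamma>"
  shows "decomposable A"
proof (cases "set_pmf s \<inter> A = {}")
  case True
  then have "pmf s x * indicator A x = 0" for x
    by (auto simp: set_pmf_iff indicator_def)
  then show ?thesis unfolding decomposable_def using True \<gamma>_pos id_in_perms
    by (intro exI[of _ 0] exI[of _ "\<lambda>_. return_pmf id"] exI[of _ "\<lambda>_. 0"] exI[of _ "return_pmf id"]
          exI[of _ 0]) (auto simp: measure_pmf_zero_iff)
next
  case False
  then have "pmf s x * indicator A x = measure_pmf.prob s A * pmf (cond_pmf s A) x" for x
    by (simp add: pmf_cond measure_pmf_zero_iff indicator_def)
  moreover have "set_pmf (cond_pmf s A) \<subseteq> perms N" using set_pmf_s set_cond_pmf[OF False] by auto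
  ultimately show ?thesis unfolding decomposable_def using assms
    by (intro exI[of _ 0] exI[of _ "\<lambda>_. return_pmf id"] exI[of _ "\<lambda>_. 0"] exI[of _ "cond_pmf s A"]
          exI[of _ "measure_pmf.prob s A"]) auto
qed

lemma decomposable_peel:
  assumes "decomposable (A - B)" "measure_pmf.prob s (A \<inter> B) > 0"
    and "p_non_beta_uniform N Sb max_card (\<delta> + \<delta>') (cond_pmf s (A \<inter> B))"
  shows "decomposable A"
proof -
  define \<mu> where "\<mu> = measure_pmf.prob s (A \<inter> B)"
  obtain k :: nat and F \<alpha> F' \<gamma>' where
    F: "\<forall>i<k. set_pmf (F i) \<subseteq> perms N \<and>
            p_non_beta_uniform N Sb max_card (\<delta> + \<delta>') (F i) \<and> \<alpha> i \<ge> 0"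
    and rest: "set_pmf F' \<subseteq> perms N" "\<gamma>' \<ge> 0"
    and weights: "(\<Sum>i<k. \<alpha> i) + \<gamma>' = measure_pmf.prob s (A - B)"
    and small: "\<gamma>' \<le> \<gamma>"
    and pmfs: "\<forall>x. pmf s x * indicator (A - B) x = (\<Sum>i<k. \<alpha> i * pmf (F i) x) + \<gamma>' * pmf F' x"
    using assms(1) unfolding decomposable_def by blast
  have nonempty: "set_pmf s \<inter> (A \<inter> B) \<noteq> {}"
    using assms(2) by (auto simp: measure_pmf_zero_iff[symmetric])
  have "measure_pmf.prob s A = measure_pmf.prob s (A - B) + \<mu>"
    unfolding \<mu>_def by (simp add: Diff_Int measure_pmf.finite_measure_Diff' sup_commute)
  moreover have "pmf s x * indicator A x
      = pmf s x * indicator (A - B) x + \<mu> * pmf (cond_pmf s (A \<inter> B)) x" for x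
    using assms(2) unfolding \<mu>_def by (simp add: pmf_cond[OF nonempty] indicator_def)
  moreover have "set_pmf (cond_pmf s (A \<inter> B)) \<subseteq> perms N"
    using set_pmf_s set_cond_pmf[OF nonempty] by auto
  ultimately show ?thesis
    unfolding decomposable_def using F rest weights small pmfs assms(2,3) \<mu>_def
    by (intro exI[of _ "Suc k"] exI[of _ "F(k := cond_pmf s (A \<inter> B))"] exI[of _ "\<alpha>(k := \<mu>)"]
          exI[of _ F'] exI[of _ \<gamma>']) (auto simp: lessThan_Suc less_Suc_eq)
qed

lemma decomposable: "decomposable A"
proof (induction "card (A \<inter> set_pmf s)" arbitrary: A rule: less_induct)
  case less
  show ?case
  proof (cases "measure_pmf.prob s A \<le> \<gamma>")
    case True
    then show ?thesis by (rule decomposable_if_light)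
  next
    case False
    obtain S0 where S0: "S0 \<in> candidates"
      and maximal: "\<And>S. S \<in> candidates \<Longrightarrow> density A S \<le> density A S0"
      using density_maximiser_exists[where A = A] by blast
    have "0 < measure_pmf.prob s A * (2 powr ((\<delta> + \<delta>') * real (card S0)) * Pr_part b S0)"
      using False \<gamma>_pos S0 unfolding candidates_def by simp
    then have mass_pos: "measure_pmf.prob s (A \<inter> Collect (in_parts S0)) > 0"
      using maximiser_mass[OF S0 maximal] by linarith
    have "set_pmf s \<inter> (A \<inter> Collect (in_parts S0)) \<noteq> {}"
      using mass_pos by (auto simp: measure_pmf_zero_iff[symmetric])
    then have "(A - Collect (in_parts S0)) \<inter> set_pmf s \<subset> A \<inter> set_pmf s" by blast
    moreover have "finite (A \<inter> set_pmf s)"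
      using set_pmf_s finite_perms by (meson finite_subset inf_le2 order_trans)
    ultimately have rest: "decomposable (A - Collect (in_parts S0))"
      by (intro less psubset_card_mono)
    have card_le: "real (card S0) \<le> max_card"
      using False maximal by (intro card_maximiser_le[OF _ S0]) auto
    have "p_non_beta_uniform N Sb max_card (\<delta> + \<delta>') (cond_pmf s (A \<inter> Collect (in_parts S0)))"
      using maximal by (intro p_non_beta_uniform_cond_maximiser[OF S0 _ mass_pos card_le])
    with rest mass_pos show ?thesis
      by (rule decomposable_peel)
  qed
qed

end

theorem mainTheorem10:
  fixes n m :: nat and N :: nat and Sb :: "(nat \<times> nat) set"
    and t :: "(nat \<Rightarrow> nat) pmf" and \<delta> \<delta>' \<gamma> :: real
    and h :: "(nat \<Rightarrow> nat) \<Rightarrow> 'b" and r :: 'b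
  assumes N_def: "N = 2 ^ n"
    and Sb_part: "is_part N Sb"
    and t_perm: "set_pmf t \<subseteq> perms N"
    and t_nbu: "non_beta_uniform N Sb \<delta>' t"
    and delta_pos: "\<delta> > 0"
    and gamma_def: "\<gamma> = 2 powr (- real m)"
    and prob_r: "measure_pmf.prob t {f. h f = r} \<ge> \<gamma>"
  shows "\<exists>(k::nat) (F :: nat \<Rightarrow> (nat \<Rightarrow> nat) pmf) (\<alpha> :: nat \<Rightarrow> real)
            (F' :: (nat \<Rightarrow> nat) pmf) (\<gamma>' :: real).
      (\<forall>i<k. set_pmf (F i) \<subseteq> perms N \<and>
              p_non_beta_uniform N Sb (2 * real m / \<delta>) (\<delta> + \<delta>') (F i) \<and> \<alpha> i \<ge> 0) \<and>
      set_pmf F' \<subseteq> perms N \<and> \<gamma>' \<ge> 0 \<and>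
      (\<Sum>i<k. \<alpha> i) + \<gamma>' = 1 \<and> \<gamma>' \<le> \<gamma> \<and>
      (\<forall>x. pmf (cond_pmf t {f. h f = r}) x = (\<Sum>i<k. \<alpha> i * pmf (F i) x) + \<gamma>' * pmf F' x)"
proof -
  define s where "s = cond_pmf t {f. h f = r}"
  have \<gamma>_pos: "\<gamma> > 0" using gamma_def by simp
  have "set_pmf t \<inter> {f. h f = r} \<noteq> {}"
    using prob_r \<gamma>_pos by (auto simp: measure_pmf_zero_iff[symmetric])
  then have "set_pmf s \<subseteq> perms N" using t_perm unfolding s_def by auto
  moreover have "Pr_part s S \<le> 2 powr (\<delta>' * real (card S)) * Pr_part (beta_uniform N Sb) S / \<gamma>"
    if "is_part N S" for S
  proof -
    have "Pr_part s S \<le> Pr_part t S / \<gamma>"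
      unfolding s_def using \<gamma>_pos prob_r by (rule Pr_part_cond_pmf_le)
    also have "\<dots> \<le> 2 powr (\<delta>' * real (card S)) * Pr_part (beta_uniform N Sb) S / \<gamma>"
      using t_nbu that \<gamma>_pos unfolding non_beta_uniform_def by (simp add: divide_right_mono)
    finally show ?thesis .
  qed
  ultimately interpret dense_decomposition N Sb s \<delta> \<delta>' \<gamma>
    using Sb_part delta_pos non_beta_uniform_nonneg[OF t_perm Sb_part t_nbu] \<gamma>_pos
    by unfold_locales auto
  have "- 2 * log 2 \<gamma> / \<delta> = 2 * real m / \<delta>" using gamma_def by simp
  then show ?thesis using decomposable[of UNIV, unfolded decomposable_def] unfolding s_def by simp
qed

end
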